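(* Let $A$ be an associative ring (not necessarily commutative or unital), $n\ge 2$, $1\le k\le n-1$, and let $\omega\in PBr_n$, viewed as an element of $Br_n(A)$ via $y_i\mapsto y_i^0$. Then there exists $\omega'\in Br_n$ (depending on $k$ and $\omega$ but not on $a$) such that $y_k^a\,\omega = \omega'\,y_k^a$ in $Br_n(A)$ for every $a\in A$. Consequently, for every $k$ and every $a\in A$, the element $y_k^a (y_k^0)^{-1}\in Br_n(A)$ commutes with every element of $PBr_n$.
   Context: $Br_n(A)$ is the group generated by $y_i^a$, $1\le i\le n-1$, $a\in A$, with relations for all $a,b,c\in A$: $y_i^a y_i^0 y_i^b = y_i^0 y_i^0 y_i^{a+b}$; $y_i^a y_j^b = y_j^b y_i^a$ if $|i-j|\ge 2$; $y_i^a y_{i+1}^b y_i^c = y_{i+1}^c y_i^{b+ac} y_{i+1}^a$. The Artin braid group $Br_n$ (generators $y_i$, relations $y_iy_j=y_jy_i$ for $|i-j|\ge 2$, $y_iy_{i+1}y_i=y_{i+1}y_iy_{i+1}$) is identified with the subgroup of $Br_n(A)$ generated by the $y_i^0$ (i.e. with $Br_n(0)$). $PBr_n$ is the pure braid group, the kernel of the surjection $Br_n\to\mathcal S_n$, $y_i\mapsto (i\ i+1)$. *)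

theory Defs
  imports Main
begin

text \<open>Words in the generators of Br_n(A): a letter (i, a, e) stands for y_i^a if e = False
  and for (y_i^a)^{-1} if e = True.  Group elements of Br_n(A) are words modulo the
  congruence brA_eq n generated by free cancellation and the defining relations.\<close>

type_synonym 'a letter = "nat \<times> 'a \<times> bool"

definition valid_idx :: "nat \<Rightarrow> nat \<Rightarrow> bool" where
  "valid_idx n i \<longleftrightarrow> 1 \<le> i \<and> i \<le> n - 1"

definition valid_word :: "nat \<Rightarrow> 'a letter list \<Rightarrow> bool" where
  "valid_word n w \<longleftrightarrow> (\<forall>(i, a, e) \<in> set w. valid_idx n i)"

definition y :: "nat \<Rightarrow> 'a \<Rightarrow> 'a letter" where
  "y i a = (i, a, False)"

definition yinv :: "nat \<Rightarrow> 'a \<Rightarrow> 'a letter" where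
  "yinv i a = (i, a, True)"

definition inv_letter :: "'a letter \<Rightarrow> 'a letter" where
  "inv_letter l = (case l of (i, a, e) \<Rightarrow> (i, a, \<not> e))"

inductive brA_rel :: "nat \<Rightarrow> ('a::ring) letter list \<Rightarrow> 'a letter list \<Rightarrow> bool" for n where
  free: "valid_idx n (fst l) \<Longrightarrow> brA_rel n [l, inv_letter l] []"
| rel1: "valid_idx n i \<Longrightarrow> brA_rel n [y i a, y i 0, y i b] [y i 0, y i 0, y i (a + b)]"
| rel2: "valid_idx n i \<Longrightarrow> valid_idx n j \<Longrightarrow> (i + 2 \<le> j \<or> j + 2 \<le> i) \<Longrightarrow>
           brA_rel n [y i a, y j b] [y j b, y i a]"
| rel3: "valid_idx n i \<Longrightarrow> valid_idx n (i + 1) \<Longrightarrow>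
           brA_rel n [y i a, y (i + 1) b, y i c] [y (i + 1) c, y i (b + a * c), y (i + 1) a]"

inductive brA_eq :: "nat \<Rightarrow> ('a::ring) letter list \<Rightarrow> 'a letter list \<Rightarrow> bool" for n where
  base: "brA_rel n u v \<Longrightarrow> valid_word n p \<Longrightarrow> valid_word n q \<Longrightarrow> brA_eq n (p @ u @ q) (p @ v @ q)"
| refl: "valid_word n w \<Longrightarrow> brA_eq n w w"
| sym: "brA_eq n u v \<Longrightarrow> brA_eq n v u"
| trans: "brA_eq n u v \<Longrightarrow> brA_eq n v w \<Longrightarrow> brA_eq n u w"

text \<open>Artin braid words: (i, e) is y_i if e = False, y_i^{-1} if e = True.\<close>
definition valid_braid_word :: "nat \<Rightarrow> (nat \<times> bool) list \<Rightarrow> bool" where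
  "valid_braid_word n w \<longleftrightarrow> (\<forall>(i, e) \<in> set w. valid_idx n i)"

definition embed_braid :: "(nat \<times> bool) list \<Rightarrow> ('a::ring) letter list" where
  "embed_braid w = map (\<lambda>(i, e). (i, 0, e)) w"

definition transp :: "nat \<Rightarrow> nat \<Rightarrow> nat" where
  "transp i x = (if x = i then i + 1 else if x = i + 1 then i else x)"

definition braid_perm :: "(nat \<times> bool) list \<Rightarrow> nat \<Rightarrow> nat" where
  "braid_perm w = foldr (\<lambda>(i, e) f. transp i \<circ> f) w id"

definition pure_braid_word :: "nat \<Rightarrow> (nat \<times> bool) list \<Rightarrow> bool" where
  "pure_braid_word n w \<longleftrightarrow> valid_braid_word n w \<and> braid_perm w = id"

end

theory Submission
  imports Defs
begin

text \<open>
  Let d_j = (y_j^0)^-1 y_j^a. Conjugation by the Artin generators moves d_j from the strands j, j+1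
  to other pairs of strands: to every ordered pair (p, q) of distinct strands we attach a conjugate
  D(p, q) of d_min(p,q) with D(j, j+1) = d_j, and the defining relations of Br_n(A) give
  (y_i^0)^-1 D(p, q) y_i^0 = D(s_i p, s_i q) for the transposition s_i = (i i+1). The pairs have to be
  ordered, since D(j+1, j) = (y_j^0)^-1 d_j y_j^0 differs from d_j. So a braid acts on the D(p, q)
  through its permutation, and a pure braid \<omega> commutes with d_k = D(k, k+1). Then
  y_k^a \<omega> = y_k^0 d_k \<omega> = (y_k^0 \<omega> (y_k^0)^-1) y_k^a, and y_k^a (y_k^0)^-1 = y_k^0 d_k (y_k^0)^-1
  commutes with \<omega> because (y_k^0)^-1 \<omega> y_k^0 is pure as well.
\<close>

section \<open>Words modulo the relations of Br_n(A)\<close>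

lemma valid_word_simps [simp]:
  "valid_word n []"
  "valid_word n (l # w) \<longleftrightarrow> valid_idx n (fst l) \<and> valid_word n w"
  "valid_word n (u @ v) \<longleftrightarrow> valid_word n u \<and> valid_word n v"
  by (auto simp: valid_word_def split: prod.splits)

lemma inv_letter_simp [simp]: "inv_letter (i, a, e) = (i, a, \<not> e)"
  by (simp add: inv_letter_def)

lemma fst_inv_letter [simp]: "fst (inv_letter l) = fst l"
  by (cases l) simp

lemma brA_rel_valid_word: "brA_rel n u v \<Longrightarrow> valid_word n u \<and> valid_word n v"
  by (induction rule: brA_rel.induct) (auto simp: y_def)

lemma brA_eq_valid_word: "brA_eq n u v \<Longrightarrow> valid_word n u \<and> valid_word n v"
  by (induction rule: brA_eq.induct) (auto dest: brA_rel_valid_word)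

lemma brA_eq_context:
  "brA_eq n u v \<Longrightarrow> valid_word n l \<Longrightarrow> valid_word n r \<Longrightarrow> brA_eq n (l @ u @ r) (l @ v @ r)"
proof (induction arbitrary: l r rule: brA_eq.induct)
  case (base u v p q)
  then have "brA_eq n ((l @ p) @ u @ (q @ r)) ((l @ p) @ v @ (q @ r))"
    by (intro brA_eq.base) auto
  then show ?case by simp
next
  case (refl w)
  then show ?case by (simp add: brA_eq.refl)
next
  case (sym u v)
  show ?case using sym.IH[OF sym.prems] by (rule brA_eq.sym)
next
  case (trans u v w)
  show ?case using trans.IH(1)[OF trans.prems] trans.IH(2)[OF trans.prems] by (rule brA_eq.trans)
qed

lemmas [trans] = brA_eq.trans

definition word_inv :: "'a letter list \<Rightarrow> 'a letter list" where
  "word_inv w = rev (map inv_letter w)"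

lemma word_inv_simps [simp]:
  "word_inv [] = []"
  "word_inv (l # w) = word_inv w @ [inv_letter l]"
  "word_inv (u @ v) = word_inv v @ word_inv u"
  "word_inv (word_inv w) = w"
  "valid_word n (word_inv w) \<longleftrightarrow> valid_word n w"
  by (auto simp: word_inv_def rev_map[symmetric] valid_word_def inv_letter_def split: prod.splits)
     (simp add: map_idI inv_letter_def split: prod.splits)

definition conjugate :: "'a letter list \<Rightarrow> 'a letter list \<Rightarrow> 'a letter list" where
  "conjugate c x = word_inv c @ x @ c"

lemma conjugate_Nil [simp]: "conjugate [] x = x"
  by (simp add: conjugate_def)

lemma conjugate_append: "conjugate (c\<^sub>1 @ c\<^sub>2) x = conjugate c\<^sub>2 (conjugate c\<^sub>1 x)"
  by (simp add: conjugate_def)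

lemma valid_word_conjugate [simp]:
  "valid_word n (conjugate c x) \<longleftrightarrow> valid_word n c \<and> valid_word n x"
  by (auto simp: conjugate_def)

locale brA_words =
  fixes n :: nat
begin

abbreviation brA_equiv :: "'a::ring letter list \<Rightarrow> 'a letter list \<Rightarrow> bool" (infix "\<approx>" 50)
  where "u \<approx> v \<equiv> brA_eq n u v"

abbreviation commutes :: "'a::ring letter list \<Rightarrow> 'a letter list \<Rightarrow> bool"
  where "commutes x w \<equiv> x @ w \<approx> w @ x"

lemma brA_eq_append: "u \<approx> v \<Longrightarrow> u' \<approx> v' \<Longrightarrow> u @ u' \<approx> v @ v'"
proof -
  assume uv: "u \<approx> v" and uv': "u' \<approx> v'"
  then have "valid_word n u'" "valid_word n v" by (auto dest: brA_eq_valid_word)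
  with uv uv' have "u @ u' \<approx> v @ u'" "v @ u' \<approx> v @ v'"
    using brA_eq_context[of n u v "[]" u'] brA_eq_context[of n u' v' v "[]"] by auto
  then show ?thesis by (rule brA_eq.trans)
qed

lemma brA_eq_append_left: "u \<approx> v \<Longrightarrow> valid_word n l \<Longrightarrow> l @ u \<approx> l @ v"
  by (simp add: brA_eq_append brA_eq.refl)

lemma brA_eq_append_right: "u \<approx> v \<Longrightarrow> valid_word n r \<Longrightarrow> u @ r \<approx> v @ r"
  by (simp add: brA_eq_append brA_eq.refl)

lemma brA_eq_subst:
  "u \<approx> v \<Longrightarrow> valid_word n l \<Longrightarrow> valid_word n r \<Longrightarrow> s = l @ u @ r \<Longrightarrow> t = l @ v @ r \<Longrightarrow> s \<approx> t"
  using brA_eq_context by blast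

lemma word_inv_right: "valid_word n w \<Longrightarrow> w @ word_inv w \<approx> []"
proof (induction w)
  case Nil
  then show ?case by (simp add: brA_eq.refl)
next
  case (Cons l w)
  have "(l # w) @ word_inv (l # w) = [l] @ (w @ word_inv w) @ [inv_letter l]" by simp
  also have "\<dots> \<approx> [l] @ [] @ [inv_letter l]"
    by (rule brA_eq_context) (use Cons in auto)
  also have "[l] @ [] @ [inv_letter l] \<approx> []"
    using brA_eq.base[OF brA_rel.free[of n l], of "[]" "[]"] Cons.prems by simp
  finally show ?case .
qed

lemma word_inv_left: "valid_word n w \<Longrightarrow> word_inv w @ w \<approx> []"
  using word_inv_right[of "word_inv w"] by simp

lemma cancel_inv_right:
  "valid_word n l \<Longrightarrow> valid_word n c \<Longrightarrow> valid_word n r \<Longrightarrow> l @ c @ word_inv c @ r \<approx> l @ r"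
  using brA_eq_context[OF word_inv_right[of c], of l r] by simp

lemma cancel_inv_left:
  "valid_word n l \<Longrightarrow> valid_word n c \<Longrightarrow> valid_word n r \<Longrightarrow> l @ word_inv c @ c @ r \<approx> l @ r"
  using brA_eq_context[OF word_inv_left[of c], of l r] by simp

lemma insert_inv_right:
  "valid_word n l \<Longrightarrow> valid_word n c \<Longrightarrow> valid_word n r \<Longrightarrow> l @ r \<approx> l @ c @ word_inv c @ r"
  by (rule brA_eq.sym[OF cancel_inv_right])

lemma insert_inv_left:
  "valid_word n l \<Longrightarrow> valid_word n c \<Longrightarrow> valid_word n r \<Longrightarrow> l @ r \<approx> l @ word_inv c @ c @ r"
  by (rule brA_eq.sym[OF cancel_inv_left])

lemma cancel_left: "l @ u \<approx> l @ v \<Longrightarrow> u \<approx> v"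
proof -
  assume luv: "l @ u \<approx> l @ v"
  then have valid: "valid_word n l" "valid_word n u" "valid_word n v"
    by (auto dest: brA_eq_valid_word)
  have "u \<approx> word_inv l @ l @ u"
    using insert_inv_left[of "[]" l u] valid by simp
  also have "\<dots> \<approx> word_inv l @ l @ v"
    by (rule brA_eq_append_left[OF luv]) (use valid in simp)
  also have "\<dots> \<approx> v"
    using cancel_inv_left[of "[]" l v] valid by simp
  finally show ?thesis .
qed

lemma word_inv_cong: "c \<approx> c' \<Longrightarrow> word_inv c \<approx> word_inv c'"
proof -
  assume cc': "c \<approx> c'"
  then have valid: "valid_word n c" "valid_word n c'" by (auto dest: brA_eq_valid_word)
  have "word_inv c \<approx> word_inv c @ c' @ word_inv c'"
    using insert_inv_right[of "word_inv c" c' "[]"] valid by simp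
  also have "\<dots> \<approx> word_inv c @ c @ word_inv c'"
    by (rule brA_eq_context[OF brA_eq.sym[OF cc']]) (use valid in simp_all)
  also have "\<dots> \<approx> word_inv c'"
    using cancel_inv_left[of "[]" c "word_inv c'"] valid by simp
  finally show ?thesis .
qed

lemma conjugate_cong: "x \<approx> x' \<Longrightarrow> valid_word n c \<Longrightarrow> conjugate c x \<approx> conjugate c x'"
  unfolding conjugate_def by (rule brA_eq_context) auto

lemma conjugate_cong_by: "c \<approx> c' \<Longrightarrow> valid_word n x \<Longrightarrow> conjugate c x \<approx> conjugate c' x"
  unfolding conjugate_def
  by (intro brA_eq_append word_inv_cong brA_eq_append_left) (auto dest: brA_eq_valid_word)

lemma conjugate_eq_iff: "conjugate c x \<approx> z \<longleftrightarrow> x @ c \<approx> c @ z"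
proof
  assume xcz: "conjugate c x \<approx> z"
  then have valid: "valid_word n c" "valid_word n x" "valid_word n z"
    by (auto dest: brA_eq_valid_word)
  have "x @ c \<approx> c @ conjugate c x"
    using insert_inv_right[of "[]" c "x @ c"] valid by (simp add: conjugate_def)
  also have "\<dots> \<approx> c @ z"
    by (rule brA_eq_append_left[OF xcz]) (use valid in simp)
  finally show "x @ c \<approx> c @ z" .
next
  assume xcz: "x @ c \<approx> c @ z"
  then have valid: "valid_word n c" "valid_word n x" "valid_word n z"
    by (auto dest: brA_eq_valid_word)
  have "conjugate c x = word_inv c @ x @ c" by (simp add: conjugate_def)
  also have "\<dots> \<approx> word_inv c @ c @ z"
    by (rule brA_eq_append_left[OF xcz]) (use valid in simp)
  also have "\<dots> \<approx> z"
    using cancel_inv_left[of "[]" c z] valid by simp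
  finally show "conjugate c x \<approx> z" .
qed

lemma conjugate_inverse: "conjugate c x \<approx> z \<Longrightarrow> conjugate (word_inv c) z \<approx> x"
proof -
  assume xz: "conjugate c x \<approx> z"
  then have valid: "valid_word n c" "valid_word n x" "valid_word n z"
    by (auto dest: brA_eq_valid_word)
  have "conjugate (word_inv c) z \<approx> conjugate (word_inv c) (conjugate c x)"
    by (rule conjugate_cong[OF brA_eq.sym[OF xz]]) (use valid in simp)
  also have "\<dots> = [] @ c @ word_inv c @ (x @ c @ word_inv c)"
    by (simp add: conjugate_def)
  also have "\<dots> \<approx> x @ c @ word_inv c @ []"
    using cancel_inv_right[of "[]" c "x @ c @ word_inv c"] valid by simp
  also have "\<dots> \<approx> x @ []"
    using cancel_inv_right[of x c "[]"] valid by simp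
  finally show ?thesis by simp
qed

lemma commutes_sym: "commutes x w \<Longrightarrow> commutes w x"
  by (rule brA_eq.sym)

lemma commutes_append:
  assumes "commutes x w\<^sub>1" and "commutes x w\<^sub>2"
  shows "commutes x (w\<^sub>1 @ w\<^sub>2)"
proof -
  have valid: "valid_word n x" "valid_word n w\<^sub>1" "valid_word n w\<^sub>2"
    using assms by (auto dest: brA_eq_valid_word)
  have "x @ w\<^sub>1 @ w\<^sub>2 \<approx> (w\<^sub>1 @ x) @ w\<^sub>2"
    using brA_eq_append_right[OF assms(1)] valid by simp
  also have "\<dots> \<approx> w\<^sub>1 @ (w\<^sub>2 @ x)"
    using brA_eq_append_left[OF assms(2)] valid by simp
  finally show ?thesis by simp
qed

lemma commutes_append_left: "commutes x\<^sub>1 w \<Longrightarrow> commutes x\<^sub>2 w \<Longrightarrow> commutes (x\<^sub>1 @ x\<^sub>2) w"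
  using commutes_append[OF commutes_sym commutes_sym] commutes_sym by blast

lemma commutes_word_inv: "commutes x w \<Longrightarrow> commutes x (word_inv w)"
proof -
  assume xw: "commutes x w"
  then have valid: "valid_word n x" "valid_word n w" by (auto dest: brA_eq_valid_word)
  have "x @ word_inv w \<approx> word_inv w @ w @ x @ word_inv w"
    using insert_inv_left[of "[]" w "x @ word_inv w"] valid by simp
  also have "\<dots> \<approx> word_inv w @ x @ w @ word_inv w"
    using brA_eq_context[OF brA_eq.sym[OF xw], of "word_inv w" "word_inv w"] valid by simp
  also have "\<dots> \<approx> word_inv w @ x"
    using cancel_inv_right[of "word_inv w @ x" w "[]"] valid by simp
  finally show ?thesis .
qed

lemma commutes_cong: "commutes x w \<Longrightarrow> w \<approx> w' \<Longrightarrow> commutes x w'"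
proof -
  assume xw: "commutes x w" and ww': "w \<approx> w'"
  then have valid: "valid_word n x" by (auto dest: brA_eq_valid_word)
  have "x @ w' \<approx> x @ w" by (rule brA_eq_append_left[OF brA_eq.sym[OF ww'] valid])
  also have "\<dots> \<approx> w @ x" by (fact xw)
  also have "\<dots> \<approx> w' @ x" by (rule brA_eq_append_right[OF ww' valid])
  finally show ?thesis .
qed

lemma commutes_cong_left: "commutes x w \<Longrightarrow> x \<approx> x' \<Longrightarrow> commutes x' w"
  using commutes_cong[OF commutes_sym] commutes_sym by blast

lemma conjugate_commuting: "commutes x c \<Longrightarrow> conjugate c x \<approx> x"
  by (simp add: conjugate_eq_iff)

lemma conjugate_commutes: "commutes c w \<Longrightarrow> commutes x w \<Longrightarrow> commutes (conjugate c x) w"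
  unfolding conjugate_def
  by (intro commutes_append_left commutes_sym[OF commutes_word_inv[OF commutes_sym]])

lemma commutes_conjugate:
  assumes "commutes x (c @ w @ word_inv c)" and "valid_word n w"
  shows "commutes (conjugate c x) w"
proof -
  have valid: "valid_word n x" "valid_word n c" using assms(1) by (auto dest: brA_eq_valid_word)
  have "conjugate c x @ w \<approx> word_inv c @ x @ (c @ w @ word_inv c) @ c"
    using insert_inv_left[of "word_inv c @ x @ c @ w" c "[]"] valid assms(2)
    by (simp add: conjugate_def)
  also have "\<dots> \<approx> word_inv c @ (c @ w @ word_inv c) @ x @ c"
    using brA_eq_context[OF assms(1), of "word_inv c" c] valid by simp
  also have "\<dots> \<approx> w @ conjugate c x"
    using cancel_inv_left[of "[]" c "w @ word_inv c @ x @ c"] valid assms(2)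
    by (simp add: conjugate_def)
  finally show ?thesis .
qed

end

section \<open>The elements d_j\<close>

abbreviation sigma :: "nat \<Rightarrow> 'a::ring letter" where "sigma i \<equiv> (i, 0, False)"
abbreviation sigma_inv :: "nat \<Rightarrow> 'a::ring letter" where "sigma_inv i \<equiv> (i, 0, True)"

definition delta :: "nat \<Rightarrow> 'a::ring \<Rightarrow> 'a letter list" where
  "delta j x = [sigma_inv j, (j, x, False)]"

lemma valid_word_delta [simp]: "valid_word n (delta j x) \<longleftrightarrow> valid_idx n j"
  by (simp add: delta_def)

context brA_words
begin

lemma brA_rel_equiv: "brA_rel n u v \<Longrightarrow> u \<approx> v"
  using brA_eq.base[of n u v "[]" "[]"] by simp

lemma y_commutes_sigma_square:
  "valid_idx n j \<Longrightarrow> commutes [(j, x, False)] [sigma j, sigma j]"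
  using brA_rel_equiv[OF brA_rel.rel1[of n j x 0]] by (simp add: y_def)

lemma y_commutes_far:
  "valid_idx n i \<Longrightarrow> valid_idx n j \<Longrightarrow> i + 2 \<le> j \<or> j + 2 \<le> i \<Longrightarrow> commutes [(i, x, False)] [sigma j]"
  using brA_rel_equiv[OF brA_rel.rel2[of n i j x 0]] by (simp add: y_def)

lemma braid_rel_y_left:
  "valid_idx n j \<Longrightarrow> valid_idx n (Suc j) \<Longrightarrow>
    [(j, x, False), sigma (Suc j), sigma j] \<approx> [sigma (Suc j), sigma j, (Suc j, x, False)]"
  using brA_rel_equiv[OF brA_rel.rel3[of n j x 0 0]] by (simp add: y_def)

lemma braid_rel_y_middle:
  "valid_idx n j \<Longrightarrow> valid_idx n (Suc j) \<Longrightarrow>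
    [sigma j, (Suc j, x, False), sigma j] \<approx> [sigma (Suc j), (j, x, False), sigma (Suc j)]"
  using brA_rel_equiv[OF brA_rel.rel3[of n j 0 x 0]] by (simp add: y_def)

lemma braid_rel_y_right:
  "valid_idx n j \<Longrightarrow> valid_idx n (Suc j) \<Longrightarrow>
    [sigma j, sigma (Suc j), (j, x, False)] \<approx> [(Suc j, x, False), sigma j, sigma (Suc j)]"
  using brA_rel_equiv[OF brA_rel.rel3[of n j 0 0 x]] by (simp add: y_def)

lemma braid_rel:
  "valid_idx n j \<Longrightarrow> valid_idx n (Suc j) \<Longrightarrow>
    [sigma j, sigma (Suc j), sigma j] \<approx> ([sigma (Suc j), sigma j, sigma (Suc j)] :: 'a::ring letter list)"
  using braid_rel_y_left[of j 0] by simp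

lemma sigma_inv_commutes: "commutes w [sigma i] \<Longrightarrow> commutes w [sigma_inv i]"
  using commutes_word_inv[of w "[sigma i]"] by simp

lemma delta_commutes_far:
  assumes "valid_idx n i" and "valid_idx n j" and "i + 2 \<le> j \<or> j + 2 \<le> i"
  shows "commutes (delta j x) [sigma i]"
proof -
  have "commutes [sigma i] [sigma_inv j]"
    by (rule sigma_inv_commutes[OF commutes_sym[OF y_commutes_far]]) (use assms in auto)
  moreover have "commutes [(j, x, False)] [sigma i]"
    by (rule y_commutes_far) (use assms in auto)
  ultimately show ?thesis
    using commutes_append_left[OF commutes_sym, of "[sigma i]" "[sigma_inv j]" "[(j, x, False)]"]
    by (simp add: delta_def)
qed

lemma delta_commutes_sigma_square:
  assumes "valid_idx n j"
  shows "commutes (delta j x) [sigma j, sigma j]"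
proof -
  have "commutes [sigma j, sigma j] [sigma j]"
    using assms by (simp add: brA_eq.refl)
  then have inv: "commutes [sigma_inv j] [sigma j, sigma j]"
    by (rule commutes_sym[OF sigma_inv_commutes])
  show ?thesis
    using commutes_append_left[OF inv y_commutes_sigma_square[OF assms, of x]]
    by (simp add: delta_def)
qed

context
  fixes j :: nat
  assumes valid_j [simp]: "valid_idx n j" and valid_Suc_j [simp]: "valid_idx n (Suc j)"
begin

lemma braid_rel_conj_left:
  "[sigma_inv j, sigma (Suc j), sigma j] \<approx> ([sigma (Suc j), sigma j, sigma_inv (Suc j)] :: 'a::ring letter list)"
proof -
  have "[sigma_inv j, sigma (Suc j), sigma j] \<approx> [sigma_inv j, sigma (Suc j), sigma j, sigma (Suc j), sigma_inv (Suc j) :: 'a letter]"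
    using insert_inv_right[of "[sigma_inv j, sigma (Suc j), sigma j :: 'a letter]" "[sigma (Suc j)]" "[]"]
      by simp
  also have "\<dots> \<approx> [sigma_inv j, sigma j, sigma (Suc j), sigma j, sigma_inv (Suc j)]"
    by (rule brA_eq_subst[OF brA_eq.sym[OF braid_rel[of j]], of "[sigma_inv j]" "[sigma_inv (Suc j)]"]) simp_all
  also have "\<dots> \<approx> [sigma (Suc j), sigma j, sigma_inv (Suc j)]"
    using cancel_inv_left[of "[]" "[sigma j]" "[sigma (Suc j), sigma j, sigma_inv (Suc j) :: 'a letter]"]
      by simp
  finally show ?thesis .
qed

lemma braid_rel_conj_right:
  "[sigma j, sigma (Suc j), sigma_inv j] \<approx> ([sigma_inv (Suc j), sigma j, sigma (Suc j)] :: 'a::ring letter list)"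
proof -
  have "[sigma j, sigma (Suc j), sigma_inv j] \<approx> [sigma_inv (Suc j), sigma (Suc j), sigma j, sigma (Suc j), sigma_inv j :: 'a letter]"
    using insert_inv_left[of "[]" "[sigma (Suc j)]" "[sigma j, sigma (Suc j), sigma_inv j :: 'a letter]"] by simp
  also have "\<dots> \<approx> [sigma_inv (Suc j), sigma j, sigma (Suc j), sigma j, sigma_inv j]"
    by (rule brA_eq_subst[OF brA_eq.sym[OF braid_rel[of j]], of "[sigma_inv (Suc j)]" "[sigma_inv j]"]) simp_all
  also have "\<dots> \<approx> [sigma_inv (Suc j), sigma j, sigma (Suc j)]"
    using cancel_inv_right[of "[sigma_inv (Suc j), sigma j, sigma (Suc j) :: 'a letter]" "[sigma j]" "[]"] by simp
  finally show ?thesis .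
qed

lemma braid_square_conj:
  "[sigma j, sigma (Suc j), sigma (Suc j), sigma_inv j] \<approx>
    ([sigma_inv (Suc j), sigma j, sigma j, sigma (Suc j)] :: 'a::ring letter list)"
proof -
  have "[sigma j, sigma (Suc j), sigma (Suc j), sigma_inv j] \<approx>
      [sigma_inv (Suc j), sigma (Suc j), sigma j, sigma (Suc j), sigma (Suc j), sigma_inv j :: 'a letter]"
    using insert_inv_left[of "[]" "[sigma (Suc j)]" "[sigma j, sigma (Suc j), sigma (Suc j), sigma_inv j :: 'a letter]"]
    by simp
  also have "\<dots> \<approx> [sigma_inv (Suc j), sigma j, sigma (Suc j), sigma j, sigma (Suc j), sigma_inv j]"
    by (rule brA_eq_subst[OF brA_eq.sym[OF braid_rel[of j]], of "[sigma_inv (Suc j)]" "[sigma (Suc j), sigma_inv j]"])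
      simp_all
  also have "\<dots> \<approx> [sigma_inv (Suc j), sigma j, sigma j, sigma (Suc j), sigma j, sigma_inv j]"
    by (rule brA_eq_subst[OF brA_eq.sym[OF braid_rel[of j]], of "[sigma_inv (Suc j), sigma j]" "[sigma_inv j]"])
      simp_all
  also have "\<dots> \<approx> [sigma_inv (Suc j), sigma j, sigma j, sigma (Suc j)]"
    using cancel_inv_right[of "[sigma_inv (Suc j), sigma j, sigma j, sigma (Suc j) :: 'a letter]" "[sigma j]" "[]"]
    by simp
  finally show ?thesis .
qed

lemma delta_shift:
  "delta j x @ [sigma (Suc j), sigma j] \<approx> [sigma (Suc j), sigma j] @ delta (Suc j) x"
proof -
  have "delta j x @ [sigma (Suc j), sigma j] \<approx> [sigma_inv j, sigma (Suc j), sigma j, (Suc j, x, False)]"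
    unfolding delta_def by (rule brA_eq_subst[OF braid_rel_y_left[of j], of "[sigma_inv j]" "[]"]) simp_all
  also have "\<dots> \<approx> [sigma (Suc j), sigma j, sigma_inv (Suc j), (Suc j, x, False)]"
    by (rule brA_eq_subst[OF braid_rel_conj_left, of "[]" "[(Suc j, x, False)]"]) simp_all
  finally show ?thesis by (simp add: delta_def)
qed

lemma delta_shift_back:
  "[sigma j, sigma (Suc j)] @ delta j x \<approx> delta (Suc j) x @ [sigma j, sigma (Suc j)]"
proof -
  have "[sigma j, sigma (Suc j)] @ delta j x \<approx> [sigma_inv (Suc j), sigma j, sigma (Suc j), (j, x, False)]"
    unfolding delta_def by (rule brA_eq_subst[OF braid_rel_conj_right, of "[]" "[(j, x, False)]"]) simp_all
  also have "\<dots> \<approx> [sigma_inv (Suc j), (Suc j, x, False), sigma j, sigma (Suc j)]"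
    by (rule brA_eq_subst[OF braid_rel_y_right[of j], of "[sigma_inv (Suc j)]" "[]"]) simp_all
  finally show ?thesis by (simp add: delta_def)
qed

lemma delta_commutes_next_square: "commutes (delta j x) [sigma (Suc j), sigma (Suc j)]"
proof -
  have "[sigma (Suc j), sigma j] @ [sigma (Suc j), sigma (Suc j)] @ delta j x \<approx>
      [sigma j, sigma (Suc j), sigma j, sigma (Suc j), sigma_inv j, (j, x, False)]"
    unfolding delta_def
    by (rule brA_eq_subst[OF brA_eq.sym[OF braid_rel[of j]], of "[]" "[sigma (Suc j), sigma_inv j, (j, x, False)]"])
      simp_all
  also have "\<dots> \<approx> [sigma j, sigma (Suc j)] @ delta (Suc j) x @ [sigma j, sigma (Suc j)]"
    by (rule brA_eq_subst[OF delta_shift_back, of "[sigma j, sigma (Suc j)]" "[]"]) (simp_all add: delta_def)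
  also have "\<dots> \<approx> [sigma j, (Suc j, x, False), sigma j, sigma (Suc j)]"
    using cancel_inv_right[of "[sigma j]" "[sigma (Suc j)]" "[(Suc j, x, False), sigma j, sigma (Suc j)]"]
    by (simp add: delta_def)
  also have "\<dots> \<approx> [sigma (Suc j), (j, x, False), sigma (Suc j), sigma (Suc j)]"
    by (rule brA_eq_subst[OF braid_rel_y_middle[of j], of "[]" "[sigma (Suc j)]"]) simp_all
  also have "\<dots> \<approx> [sigma (Suc j), sigma j] @ delta j x @ [sigma (Suc j), sigma (Suc j)]"
    using insert_inv_right[of "[sigma (Suc j)]" "[sigma j]" "[(j, x, False), sigma (Suc j), sigma (Suc j)]"]
    by (simp add: delta_def)
  finally show ?thesis
    by (rule brA_eq.sym[OF cancel_left])
qed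

lemma delta_commutes_twisted_square:
  "commutes (delta j x) [sigma (Suc j), sigma j, sigma j, sigma (Suc j)]"
proof -
  have "delta j x @ [sigma (Suc j), sigma j] @ [sigma j, sigma (Suc j)] \<approx>
      [sigma (Suc j), sigma j] @ delta (Suc j) x @ [sigma j, sigma (Suc j)]"
    using brA_eq_append_right[OF delta_shift, of "[sigma j, sigma (Suc j)]"] by simp
  also have "\<dots> \<approx> [sigma (Suc j), sigma j] @ [sigma j, sigma (Suc j)] @ delta j x"
    using brA_eq_append_left[OF brA_eq.sym[OF delta_shift_back], of "[sigma (Suc j), sigma j]"] by simp
  finally show ?thesis by simp
qed

lemma delta_commutes_conj_next_square:
  "commutes (delta j x) [sigma j, sigma (Suc j), sigma (Suc j), sigma_inv j]"
proof -
  have "commutes (delta j x)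
      (word_inv [sigma (Suc j), sigma (Suc j)] @ [sigma (Suc j), sigma j, sigma j, sigma (Suc j)])"
    by (rule commutes_append[OF commutes_word_inv[OF delta_commutes_next_square] delta_commutes_twisted_square])
  moreover have "word_inv [sigma (Suc j), sigma (Suc j)] @ [sigma (Suc j), sigma j, sigma j, sigma (Suc j)] \<approx>
      [sigma_inv (Suc j), sigma j, sigma j, sigma (Suc j) :: 'a letter]"
    using cancel_inv_left[of "[sigma_inv (Suc j)]" "[sigma (Suc j)]" "[sigma j, sigma j, sigma (Suc j) :: 'a letter]"]
    by simp
  ultimately show ?thesis
    by (rule commutes_cong[OF _ brA_eq.trans[OF _ brA_eq.sym[OF braid_square_conj]]])
qed

lemma delta_exchange:
  "conjugate [sigma j] (delta (Suc j) x) \<approx> conjugate [sigma (Suc j)] (delta j x)"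
proof -
  have "commutes (delta j x)
      ([sigma (Suc j), sigma j, sigma j, sigma (Suc j)] @ word_inv [sigma (Suc j), sigma (Suc j)])"
    by (rule commutes_append[OF delta_commutes_twisted_square commutes_word_inv[OF delta_commutes_next_square]])
  moreover have "[sigma (Suc j), sigma j, sigma j, sigma (Suc j)] @ word_inv [sigma (Suc j), sigma (Suc j)] \<approx>
      [sigma (Suc j)] @ [sigma j, sigma j] @ word_inv [sigma (Suc j) :: 'a letter]"
    using cancel_inv_right[of "[sigma (Suc j), sigma j, sigma j]" "[sigma (Suc j)]" "[sigma_inv (Suc j) :: 'a letter]"]
    by simp
  ultimately have "commutes (delta j x) ([sigma (Suc j)] @ [sigma j, sigma j] @ word_inv [sigma (Suc j)])"
    by (rule commutes_cong)
  then have "commutes (conjugate [sigma (Suc j)] (delta j x)) [sigma j, sigma j]"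
    by (rule commutes_conjugate) simp
  have "conjugate [sigma (Suc j), sigma j] (delta j x) \<approx> delta (Suc j) x"
    using delta_shift by (simp add: conjugate_eq_iff)
  then have "conjugate [sigma j] (delta (Suc j) x) \<approx>
      conjugate [sigma j] (conjugate [sigma (Suc j), sigma j] (delta j x))"
    by (rule conjugate_cong[OF brA_eq.sym]) simp_all
  also have "\<dots> = conjugate [sigma j, sigma j] (conjugate [sigma (Suc j)] (delta j x))"
    by (simp add: conjugate_def)
  also have "\<dots> \<approx> conjugate [sigma (Suc j)] (delta j x)"
    by (rule conjugate_commuting) fact
  finally show ?thesis .
qed

end

end

definition delta_swapped :: "nat \<Rightarrow> 'a::ring \<Rightarrow> 'a letter list" where
  "delta_swapped j x = conjugate [sigma j] (delta j x)"

definition chain :: "nat \<Rightarrow> nat \<Rightarrow> 'a::ring letter list" where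
  "chain p q = map sigma [Suc p..<q]"

lemma chain_empty [simp]: "q \<le> Suc p \<Longrightarrow> chain p q = []"
  by (simp add: chain_def)

lemma chain_snoc: "Suc p \<le> m \<Longrightarrow> chain p (Suc m) = chain p m @ [sigma m]"
  by (simp add: chain_def)

lemma chain_Cons: "Suc p < q \<Longrightarrow> chain p q = sigma (Suc p) # chain (Suc p) q"
  by (simp add: chain_def upt_conv_Cons)

lemma chain_split: "p < m \<Longrightarrow> m < q \<Longrightarrow> chain p q = chain p m @ [sigma m] @ chain m q"
  using upt_add_eq_append[of "Suc p" m "q - m"] by (simp add: chain_def upt_conv_Cons)

lemma valid_word_chain: "q \<le> n \<Longrightarrow> valid_word n (chain p q)"
  by (auto simp: chain_def valid_word_def valid_idx_def)

text \<open>\<open>full_twist p m\<close> is the full twist of the strands \<open>p + 1\<close> and \<open>m + 1\<close>.\<close>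
definition full_twist :: "nat \<Rightarrow> nat \<Rightarrow> 'a::ring letter list" where
  "full_twist p m = chain p m @ [sigma m, sigma m] @ word_inv (chain p m)"

context brA_words
begin

lemma delta_swapped_commutes_far:
  "valid_idx n i \<Longrightarrow> valid_idx n j \<Longrightarrow> i + 2 \<le> j \<or> j + 2 \<le> i \<Longrightarrow> commutes (delta_swapped j x) [sigma i]"
  unfolding delta_swapped_def
  by (rule conjugate_commutes[OF y_commutes_far delta_commutes_far]) auto

context
  fixes j :: nat
  assumes valid_j [simp]: "valid_idx n j" and valid_Suc_j [simp]: "valid_idx n (Suc j)"
begin

lemma delta_swapped_commutes_next_square:
  "commutes (delta_swapped j x) [sigma (Suc j), sigma (Suc j)]"
  unfolding delta_swapped_def
  by (rule commutes_conjugate) (use delta_commutes_conj_next_square[of j] in simp_all)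

lemma delta_swapped_shift:
  "conjugate [sigma (Suc j), sigma j] (delta_swapped j x) \<approx> delta_swapped (Suc j) x"
proof -
  have "conjugate [sigma (Suc j), sigma j] (delta_swapped j x) = conjugate [sigma j, sigma (Suc j), sigma j] (delta j x)"
    by (simp add: delta_swapped_def conjugate_def)
  also have "\<dots> \<approx> conjugate [sigma (Suc j), sigma j, sigma (Suc j)] (delta j x)"
    by (rule conjugate_cong_by[OF braid_rel]) simp_all
  also have "\<dots> = conjugate [sigma (Suc j)] (conjugate [sigma (Suc j), sigma j] (delta j x))"
    by (simp add: conjugate_def)
  also have "\<dots> \<approx> delta_swapped (Suc j) x"
    unfolding delta_swapped_def
    by (rule conjugate_cong) (use delta_shift[of j x] in \<open>simp_all add: conjugate_eq_iff\<close>)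
  finally show ?thesis .
qed

lemma delta_swapped_exchange:
  "conjugate [sigma j] (delta_swapped (Suc j) x) \<approx> conjugate [sigma (Suc j)] (delta_swapped j x)"
proof -
  have "conjugate [sigma j] (delta_swapped (Suc j) x) = conjugate [sigma (Suc j), sigma j] (delta (Suc j) x)"
    by (simp add: delta_swapped_def conjugate_def)
  also have "\<dots> \<approx> conjugate [sigma (Suc j), sigma j] (conjugate [sigma (Suc j), sigma j] (delta j x))"
    by (rule conjugate_cong[OF brA_eq.sym]) (use delta_shift[of j x] in \<open>simp_all add: conjugate_eq_iff\<close>)
  also have "\<dots> = conjugate ([sigma (Suc j)] @ [sigma j, sigma (Suc j), sigma j]) (delta j x)"
    by (simp add: conjugate_def)
  also have "\<dots> \<approx> conjugate ([sigma (Suc j)] @ [sigma (Suc j), sigma j, sigma (Suc j)]) (delta j x)"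
    by (rule conjugate_cong_by[OF brA_eq_append_left[OF braid_rel]]) simp_all
  also have "\<dots> = conjugate [sigma j, sigma (Suc j)] (conjugate [sigma (Suc j), sigma (Suc j)] (delta j x))"
    by (simp add: conjugate_def)
  also have "\<dots> \<approx> conjugate [sigma j, sigma (Suc j)] (delta j x)"
    by (rule conjugate_cong[OF conjugate_commuting[OF delta_commutes_next_square]]) simp_all
  also have "\<dots> = conjugate [sigma (Suc j)] (delta_swapped j x)"
    by (simp add: delta_swapped_def conjugate_def)
  finally show ?thesis .
qed

end

lemma commutes_chain:
  "valid_word n x \<Longrightarrow> (\<And>i. Suc p \<le> i \<Longrightarrow> i < q \<Longrightarrow> commutes x [sigma i]) \<Longrightarrow> commutes x (chain p q)"
proof (induction q)
  case 0
  then show ?case by (simp add: brA_eq.refl)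
next
  case (Suc q)
  show ?case
  proof (cases "Suc p \<le> q")
    case True
    then show ?thesis
      unfolding chain_snoc[OF True] by (intro commutes_append) (use Suc in auto)
  next
    case False
    then show ?thesis using Suc.prems by (simp add: brA_eq.refl)
  qed
qed

lemma chain_commutes_far:
  "valid_idx n i \<Longrightarrow> Suc i \<le> p \<or> Suc q \<le> i \<Longrightarrow> q \<le> n \<Longrightarrow> commutes (chain p q) [sigma i]"
  by (rule commutes_sym, rule commutes_chain) (auto intro!: y_commutes_far[simplified] simp: valid_idx_def)

lemma chain_shift:
  assumes "Suc p \<le> i" and "i + 2 \<le> q" and "q \<le> n"
  shows "chain p q @ [sigma i] \<approx> [sigma (Suc i)] @ chain p q"
proof -
  have valid: "valid_idx n i" "valid_idx n (Suc i)" "valid_word n (chain p i)" "valid_word n (chain (Suc i) q)"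
    using assms by (auto simp: valid_idx_def valid_word_chain)
  have split: "chain p q = chain p i @ [sigma i, sigma (Suc i)] @ chain (Suc i) q"
    using assms by (simp add: chain_split[of p i q] chain_Cons[of i q])
  have "chain p q @ [sigma i] = (chain p i @ [sigma i, sigma (Suc i)]) @ (chain (Suc i) q @ [sigma i])"
    by (simp add: split)
  also have "\<dots> \<approx> (chain p i @ [sigma i, sigma (Suc i)]) @ ([sigma i] @ chain (Suc i) q)"
    by (rule brA_eq_append_left[OF chain_commutes_far]) (use assms valid in auto)
  also have "\<dots> \<approx> chain p i @ [sigma (Suc i), sigma i, sigma (Suc i)] @ chain (Suc i) q"
    by (rule brA_eq_subst[OF braid_rel[of i]]) (use valid in simp_all)
  also have "\<dots> = (chain p i @ [sigma (Suc i)]) @ [sigma i, sigma (Suc i)] @ chain (Suc i) q"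
    by simp
  also have "\<dots> \<approx> ([sigma (Suc i)] @ chain p i) @ [sigma i, sigma (Suc i)] @ chain (Suc i) q"
    by (rule brA_eq_append_right[OF chain_commutes_far]) (use assms valid in auto)
  also have "\<dots> = [sigma (Suc i)] @ chain p q"
    by (simp add: split)
  finally show ?thesis .
qed

lemma full_twist_Suc:
  assumes "Suc p \<le> m" and "valid_idx n (Suc m)"
  shows "full_twist p (Suc m) \<approx> [sigma_inv (Suc m)] @ full_twist p m @ [sigma (Suc m)]"
proof -
  have valid: "valid_idx n m" "valid_word n (chain p m)"
    using assms by (auto simp: valid_idx_def valid_word_chain)
  have chain_far: "commutes (chain p m) [sigma (Suc m)]"
    by (rule chain_commutes_far) (use assms in \<open>auto simp: valid_idx_def\<close>)
  have "full_twist p (Suc m) = chain p m @ [sigma m, sigma (Suc m), sigma (Suc m), sigma_inv m] @ word_inv (chain p m)"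
    by (simp add: full_twist_def chain_snoc[OF assms(1)])
  also have "\<dots> \<approx> chain p m @ [sigma_inv (Suc m), sigma m, sigma m, sigma (Suc m)] @ word_inv (chain p m)"
    by (rule brA_eq_context[OF braid_square_conj]) (use valid assms in simp_all)
  also have "\<dots> = (chain p m @ [sigma_inv (Suc m)]) @ [sigma m, sigma m] @ ([sigma (Suc m)] @ word_inv (chain p m))"
    by simp
  also have "\<dots> \<approx> ([sigma_inv (Suc m)] @ chain p m) @ [sigma m, sigma m] @ (word_inv (chain p m) @ [sigma (Suc m)])"
    by (intro brA_eq_append brA_eq_append_left sigma_inv_commutes chain_far
        commutes_word_inv[OF commutes_sym[OF chain_far]]) (use valid in simp)
  finally show ?thesis by (simp add: full_twist_def)
qed

lemma commutes_full_twist: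
  assumes square: "commutes x [sigma (Suc p), sigma (Suc p)]"
    and far: "\<And>j. valid_idx n j \<Longrightarrow> p + 2 \<le> j \<Longrightarrow> commutes x [sigma j]"
  shows "valid_idx n m \<Longrightarrow> Suc p \<le> m \<Longrightarrow> commutes x (full_twist p m)"
proof (induction m)
  case 0
  then show ?case by simp
next
  case (Suc m)
  show ?case
  proof (cases "m = p")
    case True
    then show ?thesis using square by (simp add: full_twist_def)
  next
    case False
    then have "Suc p \<le> m" using Suc.prems by simp
    moreover have "commutes x (full_twist p m)"
      by (rule Suc.IH) (use Suc.prems \<open>Suc p \<le> m\<close> in \<open>simp_all add: valid_idx_def\<close>)
    ultimately have "commutes x ([sigma_inv (Suc m)] @ full_twist p m @ [sigma (Suc m)])"
      by (intro commutes_append sigma_inv_commutes far) (use Suc.prems in simp_all)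
    then show ?thesis
      by (rule commutes_cong[OF _ brA_eq.sym[OF full_twist_Suc]]) (use Suc.prems \<open>Suc p \<le> m\<close> in simp_all)
  qed
qed

end

section \<open>Moving d_j along the strands\<close>

text \<open>For \<open>p < q\<close>, \<open>transported b p q\<close> moves \<open>b p\<close>, which lives on the strands \<open>p\<close> and
  \<open>p + 1\<close>, to the strands \<open>p\<close> and \<open>q\<close>.\<close>
definition transported :: "(nat \<Rightarrow> 'a::ring letter list) \<Rightarrow> nat \<Rightarrow> nat \<Rightarrow> 'a letter list" where
  "transported b p q = conjugate (chain p q) (b p)"

locale strand_family = brA_words +
  fixes b :: "nat \<Rightarrow> 'a::ring letter list"
  assumes valid_family: "valid_idx n j \<Longrightarrow> valid_word n (b j)"
    and family_commutes_far:
      "valid_idx n i \<Longrightarrow> valid_idx n j \<Longrightarrow> i + 2 \<le> j \<or> j + 2 \<le> i \<Longrightarrow> commutes (b j) [sigma i]"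
    and family_commutes_next_square:
      "valid_idx n j \<Longrightarrow> valid_idx n (Suc j) \<Longrightarrow> commutes (b j) [sigma (Suc j), sigma (Suc j)]"
    and family_shift:
      "valid_idx n j \<Longrightarrow> valid_idx n (Suc j) \<Longrightarrow> conjugate [sigma (Suc j), sigma j] (b j) \<approx> b (Suc j)"
    and family_exchange:
      "valid_idx n j \<Longrightarrow> valid_idx n (Suc j) \<Longrightarrow>
        conjugate [sigma j] (b (Suc j)) \<approx> conjugate [sigma (Suc j)] (b j)"
begin

context
  fixes i p q :: nat
  assumes valid_i: "valid_idx n i" and pq: "1 \<le> p" "p < q" "q \<le> n"
begin

private lemma valid_p: "valid_idx n p"
  using pq by (simp add: valid_idx_def)

private lemma valid_chain: "valid_word n (chain p q)"
  using pq by (simp add: valid_word_chain)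

lemma transported_far:
  assumes "i + 2 \<le> p \<or> Suc q \<le> i"
  shows "conjugate [sigma i] (transported b p q) \<approx> transported b p q"
  unfolding transported_def
  by (intro conjugate_commuting conjugate_commutes chain_commutes_far family_commutes_far)
    (use assms valid_i valid_p pq in auto)

lemma transported_inner:
  assumes "Suc p \<le> i" and "i + 2 \<le> q"
  shows "conjugate [sigma i] (transported b p q) \<approx> transported b p q"
proof -
  have "conjugate [sigma i] (transported b p q) = conjugate (chain p q @ [sigma i]) (b p)"
    by (simp add: transported_def conjugate_append)
  also have "\<dots> \<approx> conjugate ([sigma (Suc i)] @ chain p q) (b p)"
    by (rule conjugate_cong_by[OF chain_shift]) (use assms pq valid_family[OF valid_p] in simp_all)
  also have "\<dots> = conjugate (chain p q) (conjugate [sigma (Suc i)] (b p))"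
    by (simp add: conjugate_def)
  also have "\<dots> \<approx> transported b p q"
    unfolding transported_def
    by (intro conjugate_cong conjugate_commuting family_commutes_far)
      (use assms pq valid_p valid_chain in \<open>auto simp: valid_idx_def\<close>)
  finally show ?thesis .
qed

lemma transported_left_end:
  assumes "Suc i = p"
  shows "conjugate [sigma i] (transported b p q) \<approx> transported b i q"
proof -
  have valid_Suc_i: "valid_idx n (Suc i)" using assms valid_p by simp
  have "conjugate [sigma i] (transported b p q) = conjugate (chain p q @ [sigma i]) (b p)"
    by (simp add: transported_def conjugate_append)
  also have "\<dots> \<approx> conjugate ([sigma i] @ chain p q) (b p)"
    by (rule conjugate_cong_by[OF chain_commutes_far]) (use assms valid_i pq valid_family[OF valid_p] in auto)
  also have "\<dots> = conjugate (chain p q) (conjugate [sigma i] (b (Suc i)))"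
    by (simp add: conjugate_def assms)
  also have "\<dots> \<approx> conjugate (chain p q) (conjugate [sigma (Suc i)] (b i))"
    by (rule conjugate_cong[OF family_exchange[OF valid_i valid_Suc_i] valid_chain])
  also have "\<dots> = transported b i q"
    using assms pq by (simp add: transported_def chain_Cons[of i q] conjugate_def)
  finally show ?thesis .
qed

lemma transported_left_start:
  assumes "i = p" and "p + 2 \<le> q"
  shows "conjugate [sigma i] (transported b p q) \<approx> transported b (Suc p) q"
proof -
  have valid_Suc_p: "valid_idx n (Suc p)" using assms pq by (simp add: valid_idx_def)
  have valid_chain': "valid_word n (chain (Suc p) q)" using pq by (simp add: valid_word_chain)
  have "conjugate [sigma i] (transported b p q) = conjugate ([sigma (Suc p)] @ chain (Suc p) q @ [sigma p]) (b p)"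
    using assms by (simp add: transported_def chain_Cons[of p q] conjugate_def)
  also have "\<dots> \<approx> conjugate ([sigma (Suc p)] @ [sigma p] @ chain (Suc p) q) (b p)"
    by (intro conjugate_cong_by brA_eq_append_left chain_commutes_far)
      (use valid_p valid_Suc_p pq valid_family[OF valid_p] in auto)
  also have "\<dots> = conjugate (chain (Suc p) q) (conjugate [sigma (Suc p), sigma p] (b p))"
    by (simp add: conjugate_def)
  also have "\<dots> \<approx> transported b (Suc p) q"
    unfolding transported_def by (rule conjugate_cong[OF family_shift[OF valid_p valid_Suc_p] valid_chain'])
  finally show ?thesis .
qed

lemma transported_right_start:
  assumes "Suc i = q" and "p + 2 \<le> q"
  shows "conjugate [sigma i] (transported b p q) \<approx> transported b p i"
proof -
  have valid_Suc_p: "valid_idx n (Suc p)" using assms pq by (simp add: valid_idx_def)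
  have "commutes (b p) (full_twist p i)"
    by (rule commutes_full_twist)
      (use valid_i assms family_commutes_next_square[OF valid_p valid_Suc_p] in
        \<open>auto intro: family_commutes_far[OF _ valid_p, simplified]\<close>)
  then have twist: "commutes (transported b p i) [sigma i, sigma i]"
    unfolding transported_def full_twist_def by (rule commutes_conjugate) (use valid_i in simp)
  have "chain p q = chain p i @ [sigma i :: 'a letter]"
    using assms chain_snoc[of p i] by simp
  then have "conjugate [sigma i] (transported b p q) = conjugate [sigma i, sigma i] (transported b p i)"
    by (simp add: transported_def conjugate_def)
  also have "\<dots> \<approx> transported b p i"
    by (rule conjugate_commuting[OF twist])
  finally show ?thesis .
qed

lemma transported_right_end:
  assumes "i = q"
  shows "conjugate [sigma i] (transported b p q) \<approx> transported b p (Suc q)"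
proof -
  have "Suc q \<le> n" using valid_i assms unfolding valid_idx_def by arith
  then have "valid_word n (transported b p (Suc q))"
    by (simp add: transported_def valid_word_chain valid_family[OF valid_p])
  then show ?thesis
    using assms pq by (simp add: transported_def conjugate_def chain_snoc brA_eq.refl)
qed

end

lemma transported_step:
  assumes valid_i: "valid_idx n i" and pq: "1 \<le> p" "p < q" "q \<le> n" and "\<not> (i = p \<and> q = Suc p)"
  shows "conjugate [sigma i] (transported b p q) \<approx> transported b (transp i p) (transp i q)"
proof -
  consider "i + 2 \<le> p \<or> Suc q \<le> i" | "Suc i = p" | "i = p" "p + 2 \<le> q" | "Suc p \<le> i" "i + 2 \<le> q"
    | "Suc i = q" "p + 2 \<le> q" | "i = q"
    using assms by linarith
  then show ?thesis
  proof cases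
    case 1
    then show ?thesis using transported_far[OF valid_i pq] pq by (auto simp: transp_def)
  next
    case 2
    then show ?thesis using transported_left_end[OF valid_i pq] pq by (auto simp: transp_def)
  next
    case 3
    then show ?thesis using transported_left_start[OF valid_i pq] pq by (auto simp: transp_def)
  next
    case 4
    then show ?thesis using transported_inner[OF valid_i pq] pq by (auto simp: transp_def)
  next
    case 5
    then show ?thesis using transported_right_start[OF valid_i pq] pq by (auto simp: transp_def)
  next
    case 6
    then show ?thesis using transported_right_end[OF valid_i pq] pq by (auto simp: transp_def)
  qed
qed

end

context brA_words
begin

lemma strand_family_delta: "strand_family n (\<lambda>j. delta j x)"
proof unfold_locales
  fix i j
  assume "valid_idx n i" "valid_idx n j" "i + 2 \<le> j \<or> j + 2 \<le> i"
  then show "commutes (delta j x) [sigma i]" by (rule delta_commutes_far)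
next
  fix j
  assume "valid_idx n j" "valid_idx n (Suc j)"
  then show "commutes (delta j x) [sigma (Suc j), sigma (Suc j)]"
    and "conjugate [sigma j] (delta (Suc j) x) \<approx> conjugate [sigma (Suc j)] (delta j x)"
    by (simp_all only: delta_commutes_next_square delta_exchange)
  from \<open>valid_idx n j\<close> \<open>valid_idx n (Suc j)\<close>
  show "conjugate [sigma (Suc j), sigma j] (delta j x) \<approx> delta (Suc j) x"
    by (simp only: conjugate_eq_iff delta_shift)
qed simp

lemma strand_family_delta_swapped: "strand_family n (\<lambda>j. delta_swapped j x)"
proof unfold_locales
  fix i j
  assume "valid_idx n i" "valid_idx n j" "i + 2 \<le> j \<or> j + 2 \<le> i"
  then show "commutes (delta_swapped j x) [sigma i]" by (rule delta_swapped_commutes_far)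
next
  fix j
  assume "valid_idx n j" "valid_idx n (Suc j)"
  then show "commutes (delta_swapped j x) [sigma (Suc j), sigma (Suc j)]"
    and "conjugate [sigma (Suc j), sigma j] (delta_swapped j x) \<approx> delta_swapped (Suc j) x"
    and "conjugate [sigma j] (delta_swapped (Suc j) x) \<approx> conjugate [sigma (Suc j)] (delta_swapped j x)"
    by (simp_all only: delta_swapped_commutes_next_square delta_swapped_exchange delta_swapped_shift)
qed (simp add: delta_swapped_def)

end

section \<open>Pure braids\<close>

lemma transp_transp [simp]: "transp i (transp i p) = p"
  by (simp add: transp_def)

lemma transp_bounds: "valid_idx n i \<Longrightarrow> 1 \<le> p \<Longrightarrow> p \<le> n \<Longrightarrow> 1 \<le> transp i p \<and> transp i p \<le> n"
  by (auto simp: transp_def valid_idx_def)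

lemma transp_less: "p < q \<Longrightarrow> \<not> (i = p \<and> q = Suc p) \<Longrightarrow> transp i p < transp i q"
  by (auto simp: transp_def)

lemma braid_perm_Nil [simp]: "braid_perm [] = id"
  by (simp add: braid_perm_def)

lemma braid_perm_Cons: "braid_perm (l # w) = transp (fst l) \<circ> braid_perm w"
  by (cases l) (simp add: braid_perm_def)

lemma braid_perm_append: "braid_perm (u @ v) = braid_perm u \<circ> braid_perm v"
  by (induction u) (auto simp: braid_perm_def)

lemma braid_perm_rev_comp: "braid_perm (rev w) \<circ> braid_perm w = id"
proof (induction w)
  case Nil
  then show ?case by simp
next
  case (Cons l w)
  have "transp (fst l) \<circ> transp (fst l) = id" by (rule ext) simp
  then show ?case
    using Cons.IH by (simp add: braid_perm_append braid_perm_Cons comp_assoc)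
qed

lemma valid_word_embed_braid: "valid_braid_word n w \<Longrightarrow> valid_word n (embed_braid w)"
  by (auto simp: valid_braid_word_def valid_word_def embed_braid_def)

text \<open>\<open>delta_pair x p q\<close> is D(p, q); for \<open>p > q\<close> it is built from \<open>delta_swapped q x\<close>, the
  element on the strands \<open>q + 1\<close>, \<open>q\<close>.\<close>
definition delta_pair :: "'a::ring \<Rightarrow> nat \<Rightarrow> nat \<Rightarrow> 'a letter list" where
  "delta_pair x p q =
    (if p < q then transported (\<lambda>j. delta j x) p q else transported (\<lambda>j. delta_swapped j x) q p)"

lemma delta_pair_adjacent: "delta_pair x k (Suc k) = delta k x"
  by (simp add: delta_pair_def transported_def)

context brA_words
begin

lemma delta_pair_conjugate_sigma:
  assumes valid_i: "valid_idx n i" and range: "1 \<le> p" "p \<le> n" "1 \<le> q" "q \<le> n" and "p \<noteq> q"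
  shows "conjugate [sigma i] (delta_pair x p q) \<approx> delta_pair x (transp i p) (transp i q)"
proof -
  consider "i = p" "q = Suc p" | "i = q" "p = Suc q" | "p < q" "\<not> (i = p \<and> q = Suc p)"
    | "q < p" "\<not> (i = q \<and> p = Suc q)"
    using \<open>p \<noteq> q\<close> by linarith
  then show ?thesis
  proof cases
    case 1
    then show ?thesis
      using valid_i by (simp add: delta_pair_def transported_def transp_def delta_swapped_def brA_eq.refl)
  next
    case 2
    then have "conjugate [sigma i] (delta_pair x p q) = conjugate [sigma q, sigma q] (delta q x)"
      by (simp add: delta_pair_def transported_def delta_swapped_def conjugate_def)
    also have "\<dots> \<approx> delta q x"
      using valid_i 2 by (intro conjugate_commuting delta_commutes_sigma_square) simp
    finally show ?thesis
      using 2 by (simp add: delta_pair_def transported_def transp_def)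
  next
    case 3
    then have "transp i p < transp i q" by (rule transp_less)
    then show ?thesis
      using strand_family.transported_step[OF strand_family_delta valid_i, of p q] range 3
      by (simp add: delta_pair_def)
  next
    case 4
    then have "transp i q < transp i p" by (rule transp_less)
    then show ?thesis
      using strand_family.transported_step[OF strand_family_delta_swapped valid_i, of q p] range 4
      by (simp add: delta_pair_def)
  qed
qed

lemma delta_pair_conjugate_letter:
  assumes "valid_idx n i" and "1 \<le> p" "p \<le> n" "1 \<le> q" "q \<le> n" and "p \<noteq> q"
  shows "conjugate [(i, 0, e)] (delta_pair x p q) \<approx> delta_pair x (transp i p) (transp i q)"
proof (cases e)
  case False
  then show ?thesis using delta_pair_conjugate_sigma[OF assms] by simp
next
  case True
  have "1 \<le> transp i p" "transp i p \<le> n" "1 \<le> transp i q" "transp i q \<le> n" "transp i p \<noteq> transp i q"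
    using transp_bounds[OF assms(1)] assms(2-6) by (metis transp_transp)+
  from conjugate_inverse[OF delta_pair_conjugate_sigma[OF assms(1) this]]
  show ?thesis using True by simp
qed

lemma delta_pair_conjugate_braid:
  assumes "valid_braid_word n w" and "1 \<le> p" "p \<le> n" "1 \<le> q" "q \<le> n" and "p \<noteq> q"
  shows "conjugate (embed_braid w) (delta_pair x p q) \<approx>
    delta_pair x (braid_perm (rev w) p) (braid_perm (rev w) q)"
  using assms
proof (induction w arbitrary: p q)
  case Nil
  have "valid_word n (delta_pair x p q)"
    using Nil by (simp add: delta_pair_def transported_def valid_word_chain valid_idx_def delta_swapped_def; arith)
  then show ?case by (simp add: embed_braid_def brA_eq.refl)
next
  case (Cons l w)
  obtain i e where l: "l = (i, e)" by (cases l)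
  have valid_i: "valid_idx n i" and valid_w: "valid_braid_word n w"
    using Cons.prems l by (auto simp: valid_braid_word_def)
  have range: "1 \<le> transp i p" "transp i p \<le> n" "1 \<le> transp i q" "transp i q \<le> n" "transp i p \<noteq> transp i q"
    using transp_bounds[OF valid_i] Cons.prems by (metis transp_transp)+
  have "conjugate (embed_braid (l # w)) (delta_pair x p q) =
      conjugate (embed_braid w) (conjugate [(i, 0, e)] (delta_pair x p q))"
    by (simp add: l embed_braid_def conjugate_def)
  also have "\<dots> \<approx> conjugate (embed_braid w) (delta_pair x (transp i p) (transp i q))"
    by (rule conjugate_cong[OF delta_pair_conjugate_letter valid_word_embed_braid[OF valid_w]])
      (use valid_i Cons.prems in simp_all)
  also have "\<dots> \<approx> delta_pair x (braid_perm (rev w) (transp i p)) (braid_perm (rev w) (transp i q))"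
    by (rule Cons.IH[OF valid_w range])
  also have "\<dots> = delta_pair x (braid_perm (rev (l # w)) p) (braid_perm (rev (l # w)) q)"
    by (simp add: l braid_perm_append braid_perm_Cons)
  finally show ?case .
qed

lemma pure_braid_commutes_delta:
  assumes "valid_idx n k" and "pure_braid_word n w"
  shows "commutes (delta k x) (embed_braid w)"
proof -
  have valid_w: "valid_braid_word n w" and "braid_perm w = id"
    using assms(2) by (auto simp: pure_braid_word_def)
  then have "braid_perm (rev w) = id"
    using braid_perm_rev_comp[of w] by simp
  moreover have "1 \<le> k" "Suc k \<le> n"
    using assms(1) unfolding valid_idx_def by arith+
  ultimately have "conjugate (embed_braid w) (delta_pair x k (Suc k)) \<approx> delta_pair x k (Suc k)"
    using delta_pair_conjugate_braid[OF valid_w, of k "Suc k"] by simp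
  then show ?thesis
    by (simp add: delta_pair_adjacent conjugate_eq_iff)
qed

lemma y_mult_pure_braid:
  assumes "valid_idx n k" and "pure_braid_word n w"
  shows "y k a # embed_braid w \<approx> embed_braid ((k, False) # w @ [(k, True)]) @ [y k a]"
proof -
  have valid_w: "valid_word n (embed_braid w)"
    using assms(2) by (simp add: pure_braid_word_def valid_word_embed_braid)
  have "y k a # embed_braid w \<approx> [sigma k] @ delta k a @ embed_braid w"
    using insert_inv_right[of "[]" "[sigma k]" "(k, a, False) # embed_braid w"] assms(1) valid_w
    by (simp add: delta_def y_def)
  also have "\<dots> \<approx> [sigma k] @ embed_braid w @ delta k a"
    by (rule brA_eq_append_left[OF pure_braid_commutes_delta[OF assms]]) (use assms(1) in simp)
  also have "\<dots> = embed_braid ((k, False) # w @ [(k, True)]) @ [y k a]"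
    by (simp add: delta_def embed_braid_def y_def)
  finally show ?thesis .
qed

lemma y_yinv_commutes_pure_braid:
  assumes "valid_idx n k" and "pure_braid_word n w"
  shows "commutes [y k a, yinv k 0] (embed_braid w)"
proof -
  have valid_w: "valid_word n (embed_braid w)"
    using assms(2) by (simp add: pure_braid_word_def valid_word_embed_braid)
  have "pure_braid_word n ((k, True) # w @ [(k, False)])"
    using assms by (auto simp: pure_braid_word_def valid_braid_word_def braid_perm_Cons braid_perm_append)
  then have "commutes (delta k a) (embed_braid ((k, True) # w @ [(k, False)]))"
    by (rule pure_braid_commutes_delta[OF assms(1)])
  then have "commutes (delta k a) ([sigma_inv k] @ embed_braid w @ word_inv [sigma_inv k])"
    by (simp add: embed_braid_def)
  then have "commutes (conjugate [sigma_inv k] (delta k a)) (embed_braid w)"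
    by (rule commutes_conjugate[OF _ valid_w])
  moreover have "conjugate [sigma_inv k] (delta k a) \<approx> [y k a, yinv k 0]"
    using cancel_inv_right[of "[]" "[sigma k]" "[(k, a, False), sigma_inv k]"] assms(1)
    by (simp add: conjugate_def delta_def y_def yinv_def)
  ultimately show ?thesis
    by (rule commutes_cong_left)
qed

end

theorem lemma2p3:
  fixes n k :: nat and w :: "(nat \<times> bool) list"
  assumes "n \<ge> 2" and "1 \<le> k" and "k \<le> n - 1" and "pure_braid_word n w"
  shows "(\<exists>w'. valid_braid_word n w' \<and>
            (\<forall>a::'a::ring. brA_eq n (y k a # embed_braid w) (embed_braid w' @ [y k a])))
       \<and> (\<forall>a::'a::ring. brA_eq n ([y k a, yinv k 0] @ embed_braid w)
                                   (embed_braid w @ [y k a, yinv k 0]))"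
proof -
  interpret brA_words n .
  have valid_k: "valid_idx n k"
    using assms by (simp add: valid_idx_def)
  have "valid_braid_word n ((k, False) # w @ [(k, True)])"
    using assms(4) valid_k by (simp add: pure_braid_word_def valid_braid_word_def)
  then show ?thesis
    using y_mult_pure_braid[OF valid_k assms(4)] y_yinv_commutes_pure_braid[OF valid_k assms(4)]
    by blast
qed

end
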